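(* Let $G$ be a finite group, $n\ge 1$, and let $F$ be a $2$-starter under $G$ with $G$-stabilizer $S$. Let $H$ be the subgraph of $K_{\overline{G\times\mathbb{Z}_n}}$ with edge set $$\{[\infty,(x,k)] : x\sim\infty \text{ in } F,\ k\in\mathbb{Z}_n\}\ \cup\ \{[(x,k),(x,r)] : x\sim\infty \text{ in } F,\ k,r\in\mathbb{Z}_n,\ k\neq r\}\ \cup\ \{[(x,k),(y,r)] : x\sim y \text{ in } F,\ x,y\in G,\ k,r\in\mathbb{Z}_n\}.$$ Then $H$ is a $2n$-factor of $K_{\overline{G\times\mathbb{Z}_n}}$, its $(G\times\mathbb{Z}_n)$-stabilizer is exactly $S\times\mathbb{Z}_n$, and $H$ is a $2n$-starter under $G\times\mathbb{Z}_n$.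
   Context: For a finite group $G$, $\overline{G}=G\cup\{\infty\}$, and $K_V$ denotes the complete graph on vertex set $V$; $u\sim v$ means $u$ is adjacent to $v$, and $[u,v]$ denotes an edge. $G$ acts on $\overline{G}$ by right multiplication, with $\infty g=\infty$; for a subgraph $F$ of $K_{\overline{G}}$ and $g\in G$, $Fg$ is the graph obtained by replacing every vertex $v$ by $vg$, and the $G$-stabilizer of $F$ is $\{g\in G: Fg=F\}$. A $k$-factor of $K_V$ is a spanning $k$-regular subgraph. For a graph $\Gamma$ with vertex set $\overline{G}$, its list of differences is the multiset $\Delta\Gamma=\{ab^{-1},\ ba^{-1} : [a,b]\in E(\Gamma),\ a\neq\infty\neq b\}$. Given a finite group $G$ with $k$ dividing $|G|$, a $k$-factor $F$ of $K_{\overline{G}}$ is a $k$-starter under $G$ if (1) the $G$-stabilizer of $F$ has order $k$, and (2) $\Delta F$ contains every element of $G\setminus\{1_G\}$. In $G\times\mathbb{Z}_n$ the group operation is $(g,i)(h,j)=(gh,i+j)$, and $G\times \mathbb{Z}_n$ acts on $\overline{G\times\mathbb{Z}_n}$ by right multiplication fixing $\infty$. *)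

theory Defs
  imports "HOL-Algebra.Elementary_Groups"
begin

text \<open>The extended vertex set G-bar = G with an extra point infinity; we model
  G-bar as a subset of the option type, with None playing the role of infinity.\<close>

definition ext_vertices :: "('a, 'm) monoid_scheme \<Rightarrow> 'a option set" where
  "ext_vertices G = Some ` carrier G \<union> {None}"

text \<open>A (simple) graph with vertex set V is given by its edge set: a set of
  two-element subsets of V.  A subgraph of the complete graph K_V is thus an
  edge set all of whose edges are 2-subsets of V.\<close>

definition is_graph_on :: "'v set \<Rightarrow> 'v set set \<Rightarrow> bool" where
  "is_graph_on V E \<longleftrightarrow> (\<forall>e\<in>E. \<exists>u v. u \<in> V \<and> v \<in> V \<and> u \<noteq> v \<and> e = {u, v})"

definition is_k_factor :: "'v set \<Rightarrow> nat \<Rightarrow> 'v set set \<Rightarrow> bool" where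
  "is_k_factor V k E \<longleftrightarrow> is_graph_on V E \<and> (\<forall>u\<in>V. card {v. {u, v} \<in> E} = k)"

definition vact :: "('a, 'm) monoid_scheme \<Rightarrow> 'a option \<Rightarrow> 'a \<Rightarrow> 'a option" where
  "vact G v g = map_option (\<lambda>x. x \<otimes>\<^bsub>G\<^esub> g) v"

definition gact :: "('a, 'm) monoid_scheme \<Rightarrow> 'a option set set \<Rightarrow> 'a \<Rightarrow> 'a option set set" where
  "gact G E g = (\<lambda>e. (\<lambda>v. vact G v g) ` e) ` E"

definition graph_stabilizer :: "('a, 'm) monoid_scheme \<Rightarrow> 'a option set set \<Rightarrow> 'a set" where
  "graph_stabilizer G E = {g \<in> carrier G. gact G E g = E}"

text \<open>The (underlying set of the) list of differences: all a b^{-1} and b a^{-1}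
  for edges [a,b] with a, b finite.  Since the edge {a,b} is unordered, both
  orientations are covered by quantifying over a and b.\<close>

definition differences :: "('a, 'm) monoid_scheme \<Rightarrow> 'a option set set \<Rightarrow> 'a set" where
  "differences G E = {a \<otimes>\<^bsub>G\<^esub> inv\<^bsub>G\<^esub> b | a b. {Some a, Some b} \<in> E \<and> a \<noteq> b}"

definition is_k_starter :: "('a, 'm) monoid_scheme \<Rightarrow> nat \<Rightarrow> 'a option set set \<Rightarrow> bool" where
  "is_k_starter G k F \<longleftrightarrow>
     group G \<and> finite (carrier G) \<and> k dvd card (carrier G) \<and>
     is_k_factor (ext_vertices G) k F \<and>
     card (graph_stabilizer G F) = k \<and>
     carrier G - {\<one>\<^bsub>G\<^esub>} \<subseteq> differences G F"

end

theory Submission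
  imports Defs
begin

text \<open>Blow every finite vertex x of F up to the fibre x \<times> K, join the fibres of the endpoints
  of each edge of F completely, and join infinity to the fibres of the two neighbours of infinity,
  which become cliques.  Every degree gets multiplied by |K|.  An element (g, t) maps the blow-up
  to itself exactly when g maps F to itself, since translation by t only permutes the second
  coordinates.  The differences (1, t) come from the cliques, and (a b\<inverse>, t) from the edge
  {(a, t), (b, 1)} over an edge {a, b} of F.  Nothing about \<int>/n\<int> is used beyond its being a
  finite group of order n.\<close>

subsection \<open>Graphs on the extended group and the action on them\<close>

lemma is_graph_on_edgeD:
  assumes "is_graph_on V E" "{u, v} \<in> E"
  shows "u \<in> V" "v \<in> V" "u \<noteq> v"
proof -
  obtain a b where "a \<in> V" "b \<in> V" "a \<noteq> b" "{u, v} = {a, b}"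
    using assms unfolding is_graph_on_def by blast
  then show "u \<in> V" "v \<in> V" "u \<noteq> v" by (auto simp: doubleton_eq_iff)
qed

lemma is_graph_on_edge_subset:
  assumes "is_graph_on V E" "e \<in> E"
  shows "e \<subseteq> V"
proof -
  obtain u v where "u \<in> V" "v \<in> V" "e = {u, v}"
    using assms unfolding is_graph_on_def by meson
  then show ?thesis by simp
qed

lemma vact_mult:
  assumes "group K" "v \<in> ext_vertices K" "g \<in> carrier K" "h \<in> carrier K"
  shows "vact K (vact K v g) h = vact K v (g \<otimes>\<^bsub>K\<^esub> h)"
  using assms by (auto simp: vact_def ext_vertices_def group.is_monoid monoid.m_assoc)

lemma vact_one:
  assumes "group K" "v \<in> ext_vertices K"
  shows "vact K v \<one>\<^bsub>K\<^esub> = v"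
  using assms by (auto simp: vact_def ext_vertices_def group.is_monoid monoid.r_one)

lemma gact_mono: "E \<subseteq> E' \<Longrightarrow> gact K E g \<subseteq> gact K E' g"
  unfolding gact_def by (rule image_mono)

lemma gact_mult:
  assumes "group K" "is_graph_on (ext_vertices K) E" "g \<in> carrier K" "h \<in> carrier K"
  shows "gact K (gact K E g) h = gact K E (g \<otimes>\<^bsub>K\<^esub> h)"
proof -
  have "(\<lambda>v. vact K (vact K v g) h) ` e = (\<lambda>v. vact K v (g \<otimes>\<^bsub>K\<^esub> h)) ` e" if "e \<in> E" for e
    using is_graph_on_edge_subset[OF assms(2) that] vact_mult[OF assms(1) _ assms(3,4)]
    by (intro image_cong) auto
  then show ?thesis
    unfolding gact_def image_image by (rule image_cong[OF refl])
qed

lemma gact_one: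
  assumes "group K" "is_graph_on (ext_vertices K) E"
  shows "gact K E \<one>\<^bsub>K\<^esub> = E"
proof -
  have "(\<lambda>v. vact K v \<one>\<^bsub>K\<^esub>) ` e = e" if "e \<in> E" for e
    using is_graph_on_edge_subset[OF assms(2) that] vact_one[OF assms(1)]
    by (simp add: subset_iff cong: image_cong)
  then show ?thesis unfolding gact_def by simp
qed

lemma gact_subset_iff:
  assumes "is_graph_on V E"
  shows "gact K E g \<subseteq> E \<longleftrightarrow> (\<forall>u v. {u, v} \<in> E \<longrightarrow> {vact K u g, vact K v g} \<in> E)"
proof
  assume moved: "gact K E g \<subseteq> E"
  show "\<forall>u v. {u, v} \<in> E \<longrightarrow> {vact K u g, vact K v g} \<in> E"
  proof (intro allI impI)
    fix u v assume "{u, v} \<in> E"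
    then have "(\<lambda>w. vact K w g) ` {u, v} \<in> gact K E g" unfolding gact_def by (rule imageI)
    then show "{vact K u g, vact K v g} \<in> E" using moved by auto
  qed
next
  assume edges: "\<forall>u v. {u, v} \<in> E \<longrightarrow> {vact K u g, vact K v g} \<in> E"
  show "gact K E g \<subseteq> E"
  proof
    fix e assume "e \<in> gact K E g"
    then obtain e0 where "e0 \<in> E" "e = (\<lambda>w. vact K w g) ` e0" unfolding gact_def by blast
    moreover obtain u v where "e0 = {u, v}"
      using assms \<open>e0 \<in> E\<close> unfolding is_graph_on_def by meson
    ultimately show "e \<in> E" using edges by simp
  qed
qed

lemma graph_stabilizer_iff:
  assumes "group K" "is_graph_on (ext_vertices K) E"
  shows "g \<in> graph_stabilizer K E \<longleftrightarrow>
    g \<in> carrier K \<and> gact K E g \<subseteq> E \<and> gact K E (inv\<^bsub>K\<^esub> g) \<subseteq> E"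
proof (cases "g \<in> carrier K")
  case True
  then have inv_g: "inv\<^bsub>K\<^esub> g \<in> carrier K" using assms(1) by simp
  have "gact K E g = E" if "gact K E g \<subseteq> E" "gact K E (inv\<^bsub>K\<^esub> g) \<subseteq> E"
  proof
    have "E = gact K (gact K E (inv\<^bsub>K\<^esub> g)) g"
      using assms True inv_g by (simp add: gact_mult gact_one group.l_inv group.r_inv)
    also have "\<dots> \<subseteq> gact K E g" using that(2) by (rule gact_mono)
    finally show "E \<subseteq> gact K E g" .
  qed (fact that(1))
  moreover have "gact K E (inv\<^bsub>K\<^esub> g) = E" if "gact K E g = E"
  proof -
    have "gact K E (inv\<^bsub>K\<^esub> g) = gact K (gact K E g) (inv\<^bsub>K\<^esub> g)" using that by simp
    also have "\<dots> = E" using assms True inv_g by (simp add: gact_mult gact_one group.l_inv group.r_inv)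
    finally show ?thesis .
  qed
  ultimately show ?thesis using True unfolding graph_stabilizer_def by auto
qed (simp add: graph_stabilizer_def)

subsection \<open>The blow-up of a 2-starter\<close>

definition blowup ::
    "('a, 'm) monoid_scheme \<Rightarrow> ('b, 'n) monoid_scheme \<Rightarrow> 'a option set set \<Rightarrow> ('a \<times> 'b) option set set"
  where
  "blowup G K F =
      {{None, Some (x, k)} | x k. {Some x, None} \<in> F \<and> k \<in> carrier K}
      \<union> {{Some (x, k), Some (x, r)} | x k r. {Some x, None} \<in> F \<and>
           k \<in> carrier K \<and> r \<in> carrier K \<and> k \<noteq> r}
      \<union> {{Some (x, k), Some (y, r)} | x y k r. {Some x, Some y} \<in> F \<and>
           x \<in> carrier G \<and> y \<in> carrier G \<and> k \<in> carrier K \<and> r \<in> carrier K}"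

lemma option_pair_cases: "w = None \<or> (\<exists>x k. w = Some (x, k))"
  by (cases w) auto

locale starter_blowup =
  fixes G :: "('a, 'm) monoid_scheme" and K :: "('b, 'n) monoid_scheme" and F :: "'a option set set"
  assumes starter: "is_k_starter G 2 F"
    and group_K: "group K" and finite_K: "finite (carrier K)"
begin

abbreviation "H \<equiv> blowup G K F"
abbreviation "P \<equiv> G \<times>\<times> K"

definition inf_nbrs :: "'a set" where "inf_nbrs = {x. {Some x, None} \<in> F}"
definition nbrs :: "'a \<Rightarrow> 'a set" where "nbrs x = {y. {Some x, Some y} \<in> F}"

lemma group_G: "group G" and finite_G: "finite (carrier G)"
  using starter unfolding is_k_starter_def by auto

interpretation G: group G by (rule group_G)
interpretation K: group K by (rule group_K)

lemma group_P: "group P"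
  by (rule DirProd_group[OF group_G group_K])

lemma F_graph: "is_graph_on (ext_vertices G) F"
  using starter unfolding is_k_starter_def is_k_factor_def by blast

lemmas F_edgeD = is_graph_on_edgeD[OF F_graph]

lemma F_degree: "u \<in> ext_vertices G \<Longrightarrow> card {v. {u, v} \<in> F} = 2"
  using starter unfolding is_k_starter_def is_k_factor_def by blast

lemma inf_nbrs_subset: "inf_nbrs \<subseteq> carrier G"
  using F_edgeD(1) unfolding inf_nbrs_def ext_vertices_def by blast

lemma nbrs_subset: "nbrs x \<subseteq> carrier G"
  using F_edgeD(2) unfolding nbrs_def ext_vertices_def by blast

lemma nbrs_irrefl: "x \<notin> nbrs x"
  using F_edgeD(3) unfolding nbrs_def by blast

lemma carrier_if_mem_nbrs: "y \<in> nbrs x \<Longrightarrow> x \<in> carrier G"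
  using F_edgeD(1) unfolding nbrs_def ext_vertices_def by blast

lemma finite_nbrs: "finite (nbrs x)"
  using nbrs_subset finite_G by (rule finite_subset)

lemma card_inf_nbrs: "card inf_nbrs = 2"
proof -
  have "{v. {None, v} \<in> F} = Some ` inf_nbrs"
  proof (rule Set.set_eqI)
    fix v show "v \<in> {v. {None, v} \<in> F} \<longleftrightarrow> v \<in> Some ` inf_nbrs"
      using F_edgeD(3)[of None None] by (cases v) (auto simp: inf_nbrs_def insert_commute)
  qed
  then have "card (Some ` inf_nbrs) = 2"
    using F_degree[of None] by (simp add: ext_vertices_def)
  then show ?thesis by (simp add: card_image)
qed

lemma card_nbrs: "x \<in> carrier G \<Longrightarrow> card (nbrs x) = (if x \<in> inf_nbrs then 1 else 2)"
proof -
  assume x: "x \<in> carrier G"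
  let ?I = "if x \<in> inf_nbrs then {None} else {}"
  have "{v. {Some x, v} \<in> F} = ?I \<union> Some ` nbrs x"
  proof (rule Set.set_eqI)
    fix v show "v \<in> {v. {Some x, v} \<in> F} \<longleftrightarrow> v \<in> ?I \<union> Some ` nbrs x"
      by (cases v) (auto simp: inf_nbrs_def nbrs_def)
  qed
  then have "card (?I \<union> Some ` nbrs x) = 2"
    using F_degree[of "Some x"] x by (simp add: ext_vertices_def)
  moreover have "card (?I \<union> Some ` nbrs x) = card ?I + card (nbrs x)"
    using finite_nbrs by (subst card_Un_disjoint) (auto simp: card_image)
  ultimately show ?thesis by (auto split: if_splits)
qed

lemma blowup_None_None: "{None} \<notin> H"
  unfolding blowup_def by (auto simp: doubleton_eq_iff)

lemma blowup_None_Some_iff: "{None, Some (y, r)} \<in> H \<longleftrightarrow> y \<in> inf_nbrs \<and> r \<in> carrier K"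
  unfolding blowup_def inf_nbrs_def by (auto simp: doubleton_eq_iff)

lemma blowup_Some_None_iff: "{Some (y, r), None} \<in> H \<longleftrightarrow> y \<in> inf_nbrs \<and> r \<in> carrier K"
  using blowup_None_Some_iff by (simp add: insert_commute)

lemma blowup_Some_Some_iff:
  "{Some (x, k), Some (y, r)} \<in> H \<longleftrightarrow> k \<in> carrier K \<and> r \<in> carrier K \<and>
     ((x = y \<and> x \<in> inf_nbrs \<and> k \<noteq> r) \<or> y \<in> nbrs x)"
proof
  assume "{Some (x, k), Some (y, r)} \<in> H"
  then show "k \<in> carrier K \<and> r \<in> carrier K \<and> ((x = y \<and> x \<in> inf_nbrs \<and> k \<noteq> r) \<or> y \<in> nbrs x)"
    unfolding blowup_def inf_nbrs_def nbrs_def by (auto simp: doubleton_eq_iff insert_commute)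
next
  assume "k \<in> carrier K \<and> r \<in> carrier K \<and> ((x = y \<and> x \<in> inf_nbrs \<and> k \<noteq> r) \<or> y \<in> nbrs x)"
  moreover have "y \<in> nbrs x \<Longrightarrow> x \<in> carrier G \<and> y \<in> carrier G"
    using nbrs_subset carrier_if_mem_nbrs by blast
  ultimately show "{Some (x, k), Some (y, r)} \<in> H"
    unfolding blowup_def inf_nbrs_def nbrs_def by blast
qed

lemma ext_vertices_product: "ext_vertices P = Some ` (carrier G \<times> carrier K) \<union> {None}"
  by (simp add: ext_vertices_def)

lemma blowup_graph: "is_graph_on (ext_vertices P) H"
  unfolding is_graph_on_def
proof
  fix e assume "e \<in> H"
  then consider (inf) x k where "e = {None, Some (x, k)}" "x \<in> inf_nbrs" "k \<in> carrier K"
    | (clique) x k r where "e = {Some (x, k), Some (x, r)}" "x \<in> inf_nbrs" "k \<in> carrier K"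
        "r \<in> carrier K" "k \<noteq> r"
    | (fibres) x y k r where "e = {Some (x, k), Some (y, r)}" "{Some x, Some y} \<in> F"
        "x \<in> carrier G" "y \<in> carrier G" "k \<in> carrier K" "r \<in> carrier K"
    unfolding blowup_def inf_nbrs_def by blast
  then show "\<exists>u v. u \<in> ext_vertices P \<and> v \<in> ext_vertices P \<and> u \<noteq> v \<and> e = {u, v}"
  proof cases
    case inf
    then show ?thesis using inf_nbrs_subset unfolding ext_vertices_product by blast
  next
    case clique
    then show ?thesis using inf_nbrs_subset unfolding ext_vertices_product by blast
  next
    case fibres
    then have "x \<noteq> y" using F_edgeD(3) by blast
    with fibres show ?thesis unfolding ext_vertices_product by blast
  qed
qed

lemma blowup_degree:
  assumes "u \<in> ext_vertices P"
  shows "card {v. {u, v} \<in> H} = 2 * card (carrier K)"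
proof -
  from assms consider (infinity) "u = None" | (vertex) x k where "u = Some (x, k)" "x \<in> carrier G" "k \<in> carrier K"
    unfolding ext_vertices_product by blast
  then show ?thesis
  proof cases
    case infinity
    have "{v. {u, v} \<in> H} = Some ` (inf_nbrs \<times> carrier K)"
    proof (rule Set.set_eqI)
      fix v show "v \<in> {v. {u, v} \<in> H} \<longleftrightarrow> v \<in> Some ` (inf_nbrs \<times> carrier K)"
        using infinity blowup_None_None blowup_None_Some_iff by (cases v) auto
    qed
    then show ?thesis by (simp add: card_image card_cartesian_product card_inf_nbrs)
  next
    case vertex
    let ?clique = "if x \<in> inf_nbrs then insert None (Some ` ({x} \<times> (carrier K - {k}))) else {}"
    have nbhd: "{v. {u, v} \<in> H} = ?clique \<union> Some ` (nbrs x \<times> carrier K)"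
    proof (rule Set.set_eqI)
      fix v show "v \<in> {v. {u, v} \<in> H} \<longleftrightarrow> v \<in> ?clique \<union> Some ` (nbrs x \<times> carrier K)"
      proof (cases v)
        case None
        then show ?thesis using vertex blowup_Some_None_iff by auto
      next
        case (Some p)
        then show ?thesis using vertex blowup_Some_Some_iff by (cases p) auto
      qed
    qed
    have "card (?clique \<union> Some ` (nbrs x \<times> carrier K)) = card ?clique + card (nbrs x \<times> carrier K)"
      using finite_K finite_nbrs nbrs_irrefl by (subst card_Un_disjoint) (auto simp: card_image)
    moreover have "card ?clique = (if x \<in> inf_nbrs then card (carrier K) else 0)"
      using vertex finite_K card_gt_0_iff[of "carrier K"] by (auto simp: card_image card_cartesian_product)
    moreover have "card (nbrs x \<times> carrier K) = (if x \<in> inf_nbrs then 1 else 2) * card (carrier K)"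
      using card_nbrs[OF vertex(2)] by (simp add: card_cartesian_product)
    ultimately show ?thesis by (simp add: nbhd)
  qed
qed

lemma blowup_factor: "is_k_factor (ext_vertices P) (2 * card (carrier K)) H"
  unfolding is_k_factor_def using blowup_graph blowup_degree by blast

lemma blowup_gact_subset:
  assumes "gact G F g \<subseteq> F" "t \<in> carrier K"
  shows "gact P H (g, t) \<subseteq> H"
  unfolding gact_subset_iff[OF blowup_graph]
proof (intro allI impI)
  have F_moved: "{vact G u g, vact G v g} \<in> F" if "{u, v} \<in> F" for u v
    using that assms(1) gact_subset_iff[OF F_graph] by blast
  have inf_moved: "x \<otimes>\<^bsub>G\<^esub> g \<in> inf_nbrs" if "x \<in> inf_nbrs" for x
    using F_moved[of "Some x" None] that by (simp add: inf_nbrs_def vact_def)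
  have nbrs_moved: "y \<otimes>\<^bsub>G\<^esub> g \<in> nbrs (x \<otimes>\<^bsub>G\<^esub> g)" if "y \<in> nbrs x" for x y
    using F_moved[of "Some x" "Some y"] that by (simp add: nbrs_def vact_def)
  fix u v assume "{u, v} \<in> H"
  then show "{vact P u (g, t), vact P v (g, t)} \<in> H"
    using option_pair_cases[of u] option_pair_cases[of v] assms(2)
    by (elim disjE exE)
      (auto simp: vact_def blowup_None_None blowup_None_Some_iff blowup_Some_None_iff
        blowup_Some_Some_iff inf_moved nbrs_moved)
qed

lemma gact_subset_of_blowup:
  assumes "gact P H (g, t) \<subseteq> H"
  shows "gact G F g \<subseteq> F"
  unfolding gact_subset_iff[OF F_graph]
proof (intro allI impI)
  have H_moved: "{vact P u (g, t), vact P v (g, t)} \<in> H" if "{u, v} \<in> H" for u v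
    using that assms gact_subset_iff[OF blowup_graph] by blast
  fix u v assume uv: "{u, v} \<in> F"
  have image_uv: "{vact G u g, vact G v g} = (\<lambda>w. vact G w g) ` {u, v}" by simp
  consider (inf) y where "{u, v} = {None, Some y}" "y \<in> inf_nbrs"
    | (fin) x y where "u = Some x" "v = Some y" "y \<in> nbrs x"
    using uv F_edgeD(3)[of None None]
    by (cases u; cases v) (auto simp: inf_nbrs_def nbrs_def insert_commute)
  then show "{vact G u g, vact G v g} \<in> F"
  proof cases
    case inf
    then have "{None, Some (y, \<one>\<^bsub>K\<^esub>)} \<in> H" using blowup_None_Some_iff by simp
    from H_moved[OF this] have "y \<otimes>\<^bsub>G\<^esub> g \<in> inf_nbrs"
      by (simp add: vact_def blowup_None_Some_iff)
    then show ?thesis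
      unfolding image_uv inf(1) by (simp add: vact_def inf_nbrs_def insert_commute)
  next
    case fin
    then have "{Some (x, \<one>\<^bsub>K\<^esub>), Some (y, \<one>\<^bsub>K\<^esub>)} \<in> H" using blowup_Some_Some_iff by simp
    from H_moved[OF this] have "y \<otimes>\<^bsub>G\<^esub> g \<in> nbrs (x \<otimes>\<^bsub>G\<^esub> g)"
      by (simp add: vact_def blowup_Some_Some_iff)
    then show ?thesis using fin by (simp add: vact_def nbrs_def)
  qed
qed

lemma blowup_gact_subset_iff:
  "t \<in> carrier K \<Longrightarrow> gact P H (g, t) \<subseteq> H \<longleftrightarrow> gact G F g \<subseteq> F"
  using blowup_gact_subset gact_subset_of_blowup by blast

lemma blowup_stabilizer: "graph_stabilizer P H = graph_stabilizer G F \<times> carrier K"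
proof (rule Set.set_eqI)
  fix p :: "'a \<times> 'b"
  obtain g t where p: "p = (g, t)" by (cases p)
  show "p \<in> graph_stabilizer P H \<longleftrightarrow> p \<in> graph_stabilizer G F \<times> carrier K"
    using blowup_gact_subset_iff[of t g] blowup_gact_subset_iff[of "inv\<^bsub>K\<^esub> t" "inv\<^bsub>G\<^esub> g"]
    by (auto simp: p graph_stabilizer_iff[OF group_P blowup_graph]
        graph_stabilizer_iff[OF group_G F_graph] inv_DirProd[OF group_G group_K])
qed

lemma blowup_differences: "carrier P - {\<one>\<^bsub>P\<^esub>} \<subseteq> differences P H"
proof
  fix p assume p: "p \<in> carrier P - {\<one>\<^bsub>P\<^esub>}"
  then obtain g t where gt: "p = (g, t)" "g \<in> carrier G" "t \<in> carrier K" by auto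
  show "p \<in> differences P H"
  proof (cases "g = \<one>\<^bsub>G\<^esub>")
    case True
    then have "t \<noteq> \<one>\<^bsub>K\<^esub>" using p gt by auto
    obtain x where x: "x \<in> inf_nbrs" using card_inf_nbrs by fastforce
    then have "x \<in> carrier G" using inf_nbrs_subset by blast
    then have "(x, t) \<otimes>\<^bsub>P\<^esub> inv\<^bsub>P\<^esub> (x, \<one>\<^bsub>K\<^esub>) = p"
      using gt True by (simp add: inv_DirProd[OF group_G group_K])
    moreover have "{Some (x, t), Some (x, \<one>\<^bsub>K\<^esub>)} \<in> H"
      using x gt(3) \<open>t \<noteq> \<one>\<^bsub>K\<^esub>\<close> by (simp add: blowup_Some_Some_iff)
    ultimately show ?thesis
      unfolding differences_def using \<open>t \<noteq> \<one>\<^bsub>K\<^esub>\<close> by fastforce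
  next
    case False
    then have "g \<in> differences G F"
      using gt starter unfolding is_k_starter_def by blast
    then obtain a b where ab: "g = a \<otimes>\<^bsub>G\<^esub> inv\<^bsub>G\<^esub> b" "b \<in> nbrs a" "a \<noteq> b"
      unfolding differences_def nbrs_def by blast
    then have "b \<in> carrier G" using nbrs_subset by blast
    then have "(a, t) \<otimes>\<^bsub>P\<^esub> inv\<^bsub>P\<^esub> (b, \<one>\<^bsub>K\<^esub>) = p"
      using gt ab by (simp add: inv_DirProd[OF group_G group_K])
    moreover have "{Some (a, t), Some (b, \<one>\<^bsub>K\<^esub>)} \<in> H"
      using ab gt(3) by (simp add: blowup_Some_Some_iff)
    ultimately show ?thesis
      unfolding differences_def using ab(3) by fastforce
  qed
qed

lemma blowup_starter: "is_k_starter P (2 * card (carrier K)) H"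
  unfolding is_k_starter_def
proof (intro conjI)
  show "group P" by (rule group_P)
  show "finite (carrier P)" using finite_G finite_K by simp
  have "2 dvd card (carrier G)" using starter unfolding is_k_starter_def by blast
  then show "2 * card (carrier K) dvd card (carrier P)" by (simp add: card_cartesian_product)
  have "card (graph_stabilizer G F) = 2" using starter unfolding is_k_starter_def by blast
  then show "card (graph_stabilizer P H) = 2 * card (carrier K)"
    by (simp add: blowup_stabilizer card_cartesian_product)
qed (fact blowup_factor blowup_differences)+

end

theorem mainTheorem7:
  fixes G :: "('a, 'm) monoid_scheme" and n :: nat and F :: "'a option set set"
    and S :: "'a set" and H :: "('a \<times> int) option set set"
  assumes "group G" and "finite (carrier G)" and "n \<ge> 1"
    and "is_k_starter G 2 F"
    and "S = graph_stabilizer G F"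
    and "H =
      {{None, Some (x, k)} | x k. {Some x, None} \<in> F \<and> k \<in> carrier (integer_mod_group n)}
      \<union> {{Some (x, k), Some (x, r)} | x k r. {Some x, None} \<in> F \<and>
           k \<in> carrier (integer_mod_group n) \<and> r \<in> carrier (integer_mod_group n) \<and> k \<noteq> r}
      \<union> {{Some (x, k), Some (y, r)} | x y k r. {Some x, Some y} \<in> F \<and>
           x \<in> carrier G \<and> y \<in> carrier G \<and>
           k \<in> carrier (integer_mod_group n) \<and> r \<in> carrier (integer_mod_group n)}"
  shows "is_k_factor (ext_vertices (G \<times>\<times> integer_mod_group n)) (2 * n) H
    \<and> graph_stabilizer (G \<times>\<times> integer_mod_group n) H = S \<times> carrier (integer_mod_group n)
    \<and> is_k_starter (G \<times>\<times> integer_mod_group n) (2 * n) H"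
proof -
  interpret starter_blowup G "integer_mod_group n" F
    using assms(3,4) by (intro starter_blowup.intro) (simp_all add: carrier_integer_mod_group)
  have "card (carrier (integer_mod_group n)) = n"
    using assms(3) by (simp add: carrier_integer_mod_group)
  moreover have "H = blowup G (integer_mod_group n) F"
    using assms(6) by (simp only: blowup_def)
  ultimately show ?thesis
    using blowup_factor blowup_stabilizer blowup_starter assms(5) by simp
qed

end
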